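(* Let $\Gamma$ be a connected $(Y,Y')$-bipartite distance-regularized graph. Let $D$ denote the (common) eccentricity of the vertices of $Y$, and let $c'_2=c_2(w)$ for $w\in Y'$. The following are equivalent: (i) $\Gamma$ is $2$-$Y$-homogeneous with $D=4$ and $c'_2=1$; (ii) $\Gamma$ is isomorphic to the subdivision graph of a complete bipartite graph $K_{n,n}=(X,\mathcal{R})$ with $n\ge 2$, via an isomorphism mapping $Y$ onto $X$.
   Context: Graphs are finite, simple, undirected. For vertices $u,w$ of a connected graph, $\partial(u,w)$ is the distance, $\Gamma_i(u)$ the set of vertices at distance $i$ from $u$, $\Gamma(u)=\Gamma_1(u)$, $\varepsilon(u)$ the eccentricity of $u$. For $w\in\Gamma_i(u)$ put $a_i(u,w)=|\Gamma_i(u)\cap\Gamma(w)|$, $b_i(u,w)=|\Gamma_{i+1}(u)\cap\Gamma(w)|$, $c_i(u,w)=|\Gamma_{i-1}(u)\cap\Gamma(w)|$. A vertex $u$ is distance-regularized if for each $0\le i\le\varepsilon(u)$ these numbers do not depend on $w\in\Gamma_i(u)$ (they are then written $c_i(u)$ etc.); a connected graph is distance-regularized if all vertices are. $(Y,Y')$-bipartite means the vertex set is the disjoint union of $Y,Y'$ with every edge joining $Y$ to $Y'$; in a bipartite distance-regularized graph all vertices of $Y$ have the same eccentricity and intersection numbers, and likewise for $Y'$. For a $(Y,Y')$-bipartite graph in which every vertex of $Y$ has eccentricity $D\ge3$: it is $2$-$Y$-homogeneous if for each $i$ with $1\le i\le D-1$ the number $|\Gamma(x)\cap\Gamma(y)\cap\Gamma_{i-1}(z)|$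 is the same for all $x\in Y$, $y\in\Gamma_2(x)$, $z\in\Gamma_i(x)\cap\Gamma_i(y)$. The subdivision graph of a graph is obtained by replacing each edge $uv$ by a path $u,w_{uv},v$ through a new vertex $w_{uv}$. *)

theory Defs
  imports Main
begin

definition graph :: "'a set \<Rightarrow> ('a \<Rightarrow> 'a \<Rightarrow> bool) \<Rightarrow> bool" where
  "graph V E \<longleftrightarrow> finite V \<and> (\<forall>x y. E x y \<longrightarrow> x \<in> V \<and> y \<in> V \<and> E y x \<and> x \<noteq> y)"

inductive walk :: "('a \<Rightarrow> 'a \<Rightarrow> bool) \<Rightarrow> 'a \<Rightarrow> 'a \<Rightarrow> nat \<Rightarrow> bool" for E where
  walk0: "walk E u u 0"
| walkS: "E u v \<Longrightarrow> walk E v w k \<Longrightarrow> walk E u w (Suc k)"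

definition connected_graph :: "'a set \<Rightarrow> ('a \<Rightarrow> 'a \<Rightarrow> bool) \<Rightarrow> bool" where
  "connected_graph V E \<longleftrightarrow> graph V E \<and> V \<noteq> {} \<and> (\<forall>u\<in>V. \<forall>w\<in>V. \<exists>k. walk E u w k)"

definition gdist :: "('a \<Rightarrow> 'a \<Rightarrow> bool) \<Rightarrow> 'a \<Rightarrow> 'a \<Rightarrow> nat" where
  "gdist E u w = (LEAST k. walk E u w k)"

definition sphere :: "'a set \<Rightarrow> ('a \<Rightarrow> 'a \<Rightarrow> bool) \<Rightarrow> 'a \<Rightarrow> nat \<Rightarrow> 'a set" where
  "sphere V E u i = {w \<in> V. gdist E u w = i}"

definition nbhd :: "'a set \<Rightarrow> ('a \<Rightarrow> 'a \<Rightarrow> bool) \<Rightarrow> 'a \<Rightarrow> 'a set" where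
  "nbhd V E u = {w \<in> V. E u w}"

definition ecc :: "'a set \<Rightarrow> ('a \<Rightarrow> 'a \<Rightarrow> bool) \<Rightarrow> 'a \<Rightarrow> nat" where
  "ecc V E u = Max (gdist E u ` V)"

definition a_num :: "'a set \<Rightarrow> ('a \<Rightarrow> 'a \<Rightarrow> bool) \<Rightarrow> nat \<Rightarrow> 'a \<Rightarrow> 'a \<Rightarrow> nat" where
  "a_num V E i u w = card (sphere V E u i \<inter> nbhd V E w)"

definition b_num :: "'a set \<Rightarrow> ('a \<Rightarrow> 'a \<Rightarrow> bool) \<Rightarrow> nat \<Rightarrow> 'a \<Rightarrow> 'a \<Rightarrow> nat" where
  "b_num V E i u w = card (sphere V E u (Suc i) \<inter> nbhd V E w)"

text \<open>c_i(u,w) = |\<Gamma>_{i-1}(u) \<inter> \<Gamma>(w)|; for i = 0 this is 0 (\<Gamma>_{-1} is empty).\<close>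
definition c_num :: "'a set \<Rightarrow> ('a \<Rightarrow> 'a \<Rightarrow> bool) \<Rightarrow> nat \<Rightarrow> 'a \<Rightarrow> 'a \<Rightarrow> nat" where
  "c_num V E i u w = (if i = 0 then 0 else card (sphere V E u (i - 1) \<inter> nbhd V E w))"

definition dist_regularized_vertex :: "'a set \<Rightarrow> ('a \<Rightarrow> 'a \<Rightarrow> bool) \<Rightarrow> 'a \<Rightarrow> bool" where
  "dist_regularized_vertex V E u \<longleftrightarrow>
     (\<forall>i \<le> ecc V E u. \<forall>w \<in> sphere V E u i. \<forall>w' \<in> sphere V E u i.
        a_num V E i u w = a_num V E i u w' \<and> b_num V E i u w = b_num V E i u w'
        \<and> c_num V E i u w = c_num V E i u w')"

definition dist_regularized_graph :: "'a set \<Rightarrow> ('a \<Rightarrow> 'a \<Rightarrow> bool) \<Rightarrow> bool" where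
  "dist_regularized_graph V E \<longleftrightarrow> connected_graph V E \<and> (\<forall>u\<in>V. dist_regularized_vertex V E u)"

definition bipartite_YY :: "'a set \<Rightarrow> ('a \<Rightarrow> 'a \<Rightarrow> bool) \<Rightarrow> 'a set \<Rightarrow> 'a set \<Rightarrow> bool" where
  "bipartite_YY V E Y Y' \<longleftrightarrow> Y \<union> Y' = V \<and> Y \<inter> Y' = {} \<and>
     (\<forall>x y. E x y \<longrightarrow> (x \<in> Y \<and> y \<in> Y') \<or> (x \<in> Y' \<and> y \<in> Y))"

definition two_Y_homogeneous :: "'a set \<Rightarrow> ('a \<Rightarrow> 'a \<Rightarrow> bool) \<Rightarrow> 'a set \<Rightarrow> 'a set \<Rightarrow> nat \<Rightarrow> bool" where
  "two_Y_homogeneous V E Y Y' D \<longleftrightarrow> bipartite_YY V E Y Y' \<and> 3 \<le> D \<and> (\<forall>x\<in>Y. ecc V E x = D) \<and>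
     (\<forall>i. 1 \<le> i \<and> i \<le> D - 1 \<longrightarrow>
        (\<exists>g. \<forall>x\<in>Y. \<forall>y\<in>sphere V E x 2. \<forall>z\<in>sphere V E x i \<inter> sphere V E y i.
           card (nbhd V E x \<inter> nbhd V E y \<inter> sphere V E z (i - 1)) = g))"

text \<open>Subdivision graph of (V,E): original vertices Inl v, and a new vertex Inr {u,v} for each edge uv.\<close>
definition subdiv_V :: "'b set \<Rightarrow> ('b \<Rightarrow> 'b \<Rightarrow> bool) \<Rightarrow> ('b + 'b set) set" where
  "subdiv_V V E = Inl ` V \<union> {Inr {u, v} | u v. E u v}"

definition subdiv_E :: "('b \<Rightarrow> 'b \<Rightarrow> bool) \<Rightarrow> ('b + 'b set) \<Rightarrow> ('b + 'b set) \<Rightarrow> bool" where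
  "subdiv_E E p q \<longleftrightarrow> (\<exists>u v. E u v \<and> ((p = Inl u \<and> q = Inr {u, v}) \<or> (p = Inr {u, v} \<and> q = Inl u)))"

definition Knn_V :: "nat \<Rightarrow> nat set" where
  "Knn_V n = {0..<2*n}"

definition Knn_E :: "nat \<Rightarrow> nat \<Rightarrow> nat \<Rightarrow> bool" where
  "Knn_E n a b \<longleftrightarrow> (a < n \<and> n \<le> b \<and> b < 2*n) \<or> (b < n \<and> n \<le> a \<and> a < 2*n)"

end

theory Submission
  imports Defs
begin

text \<open>
  Both conditions are equivalent to a combinatorial description of \<Gamma>: \<open>Y\<close> is the disjoint
  union of two parts \<open>S\<close> and \<open>T\<close> of equal size, every vertex of \<open>Y'\<close> has exactly two
  neighbours, one in each part, and any \<open>s \<in> S\<close>, \<open>t \<in> T\<close> are joined through exactly one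
  vertex of \<open>Y'\<close>. This is precisely the subdivision graph of \<open>K\<^sub>n\<^sub>,\<^sub>n\<close>, the original
  vertices being numbered through \<open>S\<close> and \<open>T\<close>.

  In such a graph two distinct vertices of \<open>Y\<close> are at distance 2 if they lie in different
  parts and at distance 4 otherwise. This gives \<open>D = 4\<close> and \<open>c'\<^sub>2 = 1\<close>, and the
  homogeneity conditions for \<open>i = 2, 3\<close> hold with constant 0: no three vertices of \<open>Y\<close>
  are pairwise at distance 2, and a vertex at distance 2 from the common neighbour of two
  vertices of \<open>Y\<close> is adjacent to one of them.

  Conversely, \<open>c'\<^sub>2 = 1\<close> means that two vertices of \<open>Y'\<close> have at most one common
  neighbour, and distance-regularity makes all vertices of \<open>Y'\<close> have the same degree
  \<open>k' \<ge> 2\<close>. If \<open>k' \<ge> 3\<close>, small configurations force both homogeneity constants to be 1;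
  then three vertices of \<open>Y\<close> at pairwise distance 2 can be found whose only possible common
  neighbour is at distance 3 from one of them, a contradiction. So \<open>k' = 2\<close>. Fixing
  \<open>x\<^sub>0 \<in> Y\<close>, let \<open>B\<close> be the vertices of \<open>Y\<close> at distance 2 from \<open>x\<^sub>0\<close> and \<open>A\<close> the others.
  Since \<open>c\<^sub>3 \<le> 1\<close> at \<open>x\<^sub>0\<close>, every vertex of \<open>Y'\<close> has one neighbour in \<open>A\<close> and one in \<open>B\<close>, and
  any \<open>a \<in> A\<close>, \<open>b \<in> B\<close> turn out to have a common neighbour. Finally \<open>|A| = |B|\<close>: the vertices
  of \<open>A\<close> have degree \<open>|B|\<close>, those of \<open>B\<close> degree \<open>|A|\<close>, and all vertices of \<open>Y\<close> have the
  same degree.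
\<close>

lemma ex_notin_of_card_less: "finite B \<Longrightarrow> card B < card A \<Longrightarrow> \<exists>y\<in>A. y \<notin> B"
  by (meson card_mono subsetI leD)

lemma ex_other_of_two_le_card: "2 \<le> card A \<Longrightarrow> \<exists>b\<in>A. b \<noteq> a"
proof (rule ccontr)
  assume "2 \<le> card A" "\<not> (\<exists>b\<in>A. b \<noteq> a)"
  then have "card A \<le> card {a}" by (intro card_mono) auto
  with \<open>2 \<le> card A\<close> show False by simp
qed

section \<open>Distances and degrees in connected graphs\<close>

lemma walk_append: "walk E u v k \<Longrightarrow> walk E v w l \<Longrightarrow> walk E u w (k + l)"
  by (induction rule: walk.induct) (auto intro: walk.intros)

lemma walk_snoc: "walk E u v k \<Longrightarrow> E v w \<Longrightarrow> walk E u w (Suc k)"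
  using walk_append[of E u v k w 1] by (auto intro: walk.intros)

lemma walk_SucE: "walk E u w (Suc k) \<Longrightarrow> \<exists>v. walk E u v k \<and> E v w"
proof (induction k arbitrary: u)
  case 0
  then show ?case by (auto elim!: walk.cases intro: walk.intros)
next
  case (Suc k)
  from Suc.prems obtain v where "E u v" "walk E v w (Suc k)" by (auto elim: walk.cases)
  with Suc.IH obtain x where "walk E v x k" "E x w" by blast
  then show ?case using \<open>E u v\<close> by (auto intro: walk.intros)
qed

locale connected_simple_graph =
  fixes V :: "'a set" and E :: "'a \<Rightarrow> 'a \<Rightarrow> bool"
  assumes connected: "connected_graph V E"
begin

abbreviation d :: "'a \<Rightarrow> 'a \<Rightarrow> nat" where "d \<equiv> gdist E"
abbreviation nb :: "'a \<Rightarrow> 'a set" where "nb \<equiv> nbhd V E"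

lemma finite_V: "finite V"
  using connected by (simp add: connected_graph_def graph_def)

lemma edge_in_V: "E x y \<Longrightarrow> x \<in> V" "E x y \<Longrightarrow> y \<in> V"
  using connected by (simp_all add: connected_graph_def graph_def)

lemma edge_sym: "E x y \<Longrightarrow> E y x"
  using connected by (simp add: connected_graph_def graph_def)

lemma edge_irrefl: "\<not> E x x"
  using connected by (auto simp: connected_graph_def graph_def)

lemma mem_nbhd_iff [simp]: "w \<in> nb u \<longleftrightarrow> E u w"
  using edge_in_V by (auto simp: nbhd_def)

lemma mem_sphere_iff [simp]: "w \<in> sphere V E u i \<longleftrightarrow> w \<in> V \<and> d u w = i"
  by (simp add: sphere_def)

lemma finite_nbhd: "finite (nb u)"
  using finite_V by (simp add: nbhd_def)

lemma dist_le_walk: "walk E u w k \<Longrightarrow> d u w \<le> k"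
  unfolding gdist_def by (rule Least_le)

lemma walk_dist: "u \<in> V \<Longrightarrow> w \<in> V \<Longrightarrow> walk E u w (d u w)"
  using connected unfolding connected_graph_def gdist_def by (metis LeastI)

lemma dist_triangle: "u \<in> V \<Longrightarrow> v \<in> V \<Longrightarrow> w \<in> V \<Longrightarrow> d u w \<le> d u v + d v w"
  by (meson dist_le_walk walk_append walk_dist)

lemma dist_self [simp]: "d u u = 0"
  using dist_le_walk[OF walk0] by simp

lemma dist_eq_0_iff: "u \<in> V \<Longrightarrow> w \<in> V \<Longrightarrow> d u w = 0 \<longleftrightarrow> u = w"
  using walk_dist[of u w] by (auto elim: walk.cases)

lemma dist_eq_1_iff: "u \<in> V \<Longrightarrow> w \<in> V \<Longrightarrow> d u w = 1 \<longleftrightarrow> E u w"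
proof
  assume "u \<in> V" "w \<in> V" "d u w = 1"
  then have "walk E u w 1" using walk_dist by fastforce
  then show "E u w" by (auto elim!: walk.cases)
next
  assume "u \<in> V" "w \<in> V" "E u w"
  then have "d u w \<le> 1" using dist_le_walk walk.intros by (metis One_nat_def)
  moreover have "u \<noteq> w" using edge_irrefl \<open>E u w\<close> by blast
  ultimately show "d u w = 1" using dist_eq_0_iff \<open>u \<in> V\<close> \<open>w \<in> V\<close> by fastforce
qed

lemma dist_SucE: "u \<in> V \<Longrightarrow> w \<in> V \<Longrightarrow> d u w = Suc k \<Longrightarrow> \<exists>v. E v w \<and> d u v = k"
proof -
  assume "u \<in> V" "w \<in> V" "d u w = Suc k"
  then obtain v where v: "walk E u v k" "E v w" using walk_dist walk_SucE by metis
  then have "d u v \<le> k" using dist_le_walk by blast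
  moreover have "d u w \<le> Suc (d u v)"
    using v edge_in_V \<open>u \<in> V\<close> by (meson dist_le_walk walk_dist walk_snoc)
  ultimately show ?thesis using v \<open>d u w = Suc k\<close> by force
qed

lemma dist_edge_le: "u \<in> V \<Longrightarrow> E v w \<Longrightarrow> d u w \<le> Suc (d u v)"
  using edge_in_V by (meson dist_le_walk walk_dist walk_snoc)

lemma dist_eq_2_iff:
  assumes "u \<in> V" "w \<in> V"
  shows "d u w = 2 \<longleftrightarrow> u \<noteq> w \<and> \<not> E u w \<and> (\<exists>v. E u v \<and> E v w)"
proof
  assume "d u w = 2"
  then obtain v where "E v w" "d u v = 1" using dist_SucE assms by (metis Suc_1)
  then have "E u v" using dist_eq_1_iff assms(1) edge_in_V(1) by blast
  moreover have "u \<noteq> w" "\<not> E u w" using \<open>d u w = 2\<close> dist_eq_1_iff[OF assms] by auto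
  ultimately show "u \<noteq> w \<and> \<not> E u w \<and> (\<exists>v. E u v \<and> E v w)" using \<open>E v w\<close> by blast
next
  assume "u \<noteq> w \<and> \<not> E u w \<and> (\<exists>v. E u v \<and> E v w)"
  then obtain v where "u \<noteq> w" "\<not> E u w" "E u v" "E v w" by blast
  then have "d u v = 1" using dist_eq_1_iff assms(1) edge_in_V(2) by blast
  then have "d u w \<le> 2" using dist_edge_le[OF assms(1) \<open>E v w\<close>] by simp
  moreover have "d u w \<noteq> 0" "d u w \<noteq> 1"
    using \<open>u \<noteq> w\<close> \<open>\<not> E u w\<close> dist_eq_0_iff dist_eq_1_iff assms by blast+
  ultimately show "d u w = 2" by linarith
qed

lemma sphere_0: "u \<in> V \<Longrightarrow> sphere V E u 0 = {u}"
  using dist_eq_0_iff by auto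

lemma sphere_1: "u \<in> V \<Longrightarrow> sphere V E u 1 = nb u"
  using dist_eq_1_iff edge_in_V by auto

lemma dist_le_ecc: "w \<in> V \<Longrightarrow> d u w \<le> ecc V E u"
  unfolding ecc_def using finite_V by auto

lemma ecc_attained: "\<exists>w\<in>V. d u w = ecc V E u"
proof -
  have "V \<noteq> {}" using connected by (simp add: connected_graph_def)
  then have "ecc V E u \<in> gdist E u ` V" unfolding ecc_def using finite_V by (intro Max_in) auto
  then show ?thesis by auto
qed

lemma card_nbhd_eq_c_a_b:
  assumes "u \<in> V" "w \<in> sphere V E u i"
  shows "card (nb w) = c_num V E i u w + a_num V E i u w + b_num V E i u w"
proof -
  let ?C = "if i = 0 then {} else sphere V E u (i - 1) \<inter> nb w"
  let ?A = "sphere V E u i \<inter> nb w" and ?B = "sphere V E u (Suc i) \<inter> nb w"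
  have split: "nb w = ?C \<union> ?A \<union> ?B"
  proof (intro equalityI subsetI)
    fix v assume "v \<in> nb w"
    then have "E w v" "E v w" by (simp_all add: edge_sym)
    then have "d u v \<le> Suc i" "i \<le> Suc (d u v)"
      using dist_edge_le[OF assms(1)] assms(2) by fastforce+
    then show "v \<in> ?C \<union> ?A \<union> ?B" using \<open>v \<in> nb w\<close> edge_in_V by auto
  qed (auto split: if_splits)
  have "card (nb w) = card (?C \<union> ?A \<union> ?B)"
    by (rule arg_cong[OF split])
  also have "\<dots> = card ?C + card ?A + card ?B"
  proof -
    have "?C \<inter> ?A = {}" "(?C \<union> ?A) \<inter> ?B = {}" by auto
    then show ?thesis by (simp add: card_Un_disjoint finite_nbhd)
  qed
  also have "\<dots> = c_num V E i u w + a_num V E i u w + b_num V E i u w"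
    by (simp add: c_num_def a_num_def b_num_def)
  finally show ?thesis .
qed

lemma dist_regularized_c_num_eq:
  "dist_regularized_vertex V E u \<Longrightarrow> i \<le> ecc V E u \<Longrightarrow> w \<in> sphere V E u i \<Longrightarrow>
    w' \<in> sphere V E u i \<Longrightarrow> c_num V E i u w = c_num V E i u w'"
  unfolding dist_regularized_vertex_def by blast

lemma dist_regularized_sphere_degree:
  assumes "dist_regularized_vertex V E u" "u \<in> V" "i \<le> ecc V E u"
    and "w \<in> sphere V E u i" "w' \<in> sphere V E u i"
  shows "card (nb w) = card (nb w')"
  using assms card_nbhd_eq_c_a_b[of u w i] card_nbhd_eq_c_a_b[of u w' i]
  unfolding dist_regularized_vertex_def by metis

lemma nbrs_same_degree:
  assumes "\<forall>u\<in>V. dist_regularized_vertex V E u" "E u v" "E u w"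
  shows "card (nb v) = card (nb w)"
proof (rule dist_regularized_sphere_degree[of u 1])
  show "1 \<le> ecc V E u" using dist_le_ecc[of v u] dist_eq_1_iff edge_in_V assms(2) by fastforce
qed (use assms edge_in_V dist_eq_1_iff in auto)

lemma even_dist_same_degree:
  assumes DR: "\<forall>u\<in>V. dist_regularized_vertex V E u" and "u \<in> V" "w \<in> V" "even (d u w)"
  shows "card (nb u) = card (nb w)"
proof -
  have "card (nb u) = card (nb w)" if "w \<in> V" "d u w = 2 * k" for k w
    using that
  proof (induction k arbitrary: w)
    case 0
    then show ?case using dist_eq_0_iff \<open>u \<in> V\<close> by simp
  next
    case (Suc k)
    obtain v where v: "E v w" "d u v = Suc (2 * k)" using dist_SucE \<open>u \<in> V\<close> Suc.prems by force
    obtain v' where v': "E v' v" "d u v' = 2 * k" using dist_SucE \<open>u \<in> V\<close> v edge_in_V by blast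
    have "card (nb v') = card (nb w)" using nbrs_same_degree[OF DR] v v' edge_sym by blast
    then show ?case using Suc.IH v' edge_in_V by metis
  qed
  then show ?thesis using assms by (metis evenE)
qed

end

section \<open>Bipartite graphs\<close>

locale bipartite_connected_graph = connected_simple_graph +
  fixes Y Y' :: "'a set"
  assumes bipartite: "bipartite_YY V E Y Y'"
begin

lemma V_eq: "V = Y \<union> Y'" and Y_Y'_disjoint: "Y \<inter> Y' = {}"
  using bipartite by (auto simp: bipartite_YY_def)

lemma Y_in_V: "x \<in> Y \<Longrightarrow> x \<in> V" and Y'_in_V: "x \<in> Y' \<Longrightarrow> x \<in> V"
  using V_eq by auto

lemma edge_Y_Y': "E x y \<Longrightarrow> x \<in> Y \<Longrightarrow> y \<in> Y'"
  and edge_Y'_Y: "E x y \<Longrightarrow> x \<in> Y' \<Longrightarrow> y \<in> Y"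
  using bipartite Y_Y'_disjoint by (auto simp: bipartite_YY_def)

lemma walk_parity: "walk E u w k \<Longrightarrow> u \<in> V \<Longrightarrow> (u \<in> Y \<longleftrightarrow> w \<in> Y) \<longleftrightarrow> even k"
proof (induction rule: walk.induct)
  case (walkS u v w k)
  have "(v \<in> Y \<longleftrightarrow> w \<in> Y) \<longleftrightarrow> even k" using walkS edge_in_V by blast
  moreover have "u \<in> Y \<longleftrightarrow> v \<notin> Y" using walkS(1) edge_Y_Y' edge_Y'_Y walkS(4) V_eq Y_Y'_disjoint by blast
  ultimately show ?case by auto
qed simp

lemma dist_parity: "u \<in> V \<Longrightarrow> w \<in> V \<Longrightarrow> (u \<in> Y \<longleftrightarrow> w \<in> Y) \<longleftrightarrow> even (d u w)"
  using walk_parity walk_dist by blast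

lemma dist_eq_2_iff_common_nbr:
  assumes "u \<in> V" "w \<in> V"
  shows "d u w = 2 \<longleftrightarrow> u \<noteq> w \<and> (\<exists>v. E u v \<and> E w v)"
proof -
  have "\<not> E u w" if "E u v" "E w v" for v
    using that edge_Y_Y' edge_Y'_Y V_eq Y_Y'_disjoint edge_in_V by blast
  then show ?thesis using dist_eq_2_iff[OF assms] edge_sym by blast
qed

lemma two_Y_homogeneous_4_iff:
  "two_Y_homogeneous V E Y Y' 4 \<longleftrightarrow> (\<forall>x\<in>Y. ecc V E x = 4) \<and>
     (\<exists>\<gamma>. \<forall>x\<in>Y. \<forall>y\<in>V. \<forall>z\<in>V. d x y = 2 \<longrightarrow> d x z = 2 \<longrightarrow> d y z = 2 \<longrightarrow>
        card (nb x \<inter> nb y \<inter> nb z) = \<gamma>) \<and>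
     (\<exists>\<gamma>. \<forall>x\<in>Y. \<forall>y\<in>V. \<forall>z\<in>V. d x y = 2 \<longrightarrow> d x z = 3 \<longrightarrow> d y z = 3 \<longrightarrow>
        card (nb x \<inter> nb y \<inter> sphere V E z 2) = \<gamma>)"
proof -
  let ?hom = "\<lambda>i. \<exists>g. \<forall>x\<in>Y. \<forall>y\<in>sphere V E x 2. \<forall>z\<in>sphere V E x i \<inter> sphere V E y i.
           card (nb x \<inter> nb y \<inter> sphere V E z (i - 1)) = g"
  have "?hom 1" \<comment> \<open>in every bipartite graph\<close>
  proof (intro exI ballI)
    fix x y z assume "z \<in> sphere V E x 1 \<inter> sphere V E y 1" and "x \<in> Y" and "y \<in> sphere V E x 2"
    then have "nb x \<inter> nb y \<inter> sphere V E z (1 - 1) = {z}"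
      using dist_eq_1_iff sphere_0 Y_in_V by auto
    then show "card (nb x \<inter> nb y \<inter> sphere V E z (1 - 1)) = 1" by simp
  qed
  moreover have "(\<forall>i. 1 \<le> i \<and> i \<le> 4 - 1 \<longrightarrow> ?hom i) \<longleftrightarrow> ?hom 1 \<and> ?hom 2 \<and> ?hom 3"
    by (auto simp: le_Suc_eq numeral_3_eq_3 numeral_2_eq_2)
  moreover have "?hom 2 \<longleftrightarrow> (\<exists>\<gamma>. \<forall>x\<in>Y. \<forall>y\<in>V. \<forall>z\<in>V. d x y = 2 \<longrightarrow> d x z = 2 \<longrightarrow> d y z = 2 \<longrightarrow>
        card (nb x \<inter> nb y \<inter> nb z) = \<gamma>)"
    by (intro ex_cong1) (auto simp: sphere_1[unfolded One_nat_def])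
  moreover have "?hom 3 \<longleftrightarrow> (\<exists>\<gamma>. \<forall>x\<in>Y. \<forall>y\<in>V. \<forall>z\<in>V. d x y = 2 \<longrightarrow> d x z = 3 \<longrightarrow> d y z = 3 \<longrightarrow>
        card (nb x \<inter> nb y \<inter> sphere V E z 2) = \<gamma>)"
    by (intro ex_cong1) auto
  ultimately show ?thesis using bipartite by (auto simp: two_Y_homogeneous_def)
qed

end

section \<open>Subdivisions of complete bipartite graphs\<close>

lemma subdiv_E_sym: "subdiv_E R p q \<longleftrightarrow> subdiv_E R q p"
  by (auto simp: subdiv_E_def)

lemma subdiv_E_Inl_Inl: "\<not> subdiv_E R (Inl a) (Inl b)"
  and subdiv_E_Inr_Inr: "\<not> subdiv_E R (Inr A) (Inr B)"
  by (auto simp: subdiv_E_def)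

lemma subdiv_E_Inl_Inr_iff:
  assumes "R a b" "\<And>x y. R x y \<Longrightarrow> R y x"
  shows "subdiv_E R (Inl x) (Inr {a, b}) \<longleftrightarrow> x \<in> {a, b}"
proof
  assume "subdiv_E R (Inl x) (Inr {a, b})"
  then show "x \<in> {a, b}" by (auto simp: subdiv_E_def doubleton_eq_iff)
next
  assume "x \<in> {a, b}"
  moreover have "{a, b} = {b, a}" by blast
  ultimately show "subdiv_E R (Inl x) (Inr {a, b})"
    using assms unfolding subdiv_E_def by blast
qed

lemma Knn_E_sym: "Knn_E n a b \<Longrightarrow> Knn_E n b a"
  by (auto simp: Knn_E_def)

locale complete_bipartite_subdivision = bipartite_connected_graph +
  fixes S T :: "'a set"
  assumes Y_eq: "Y = S \<union> T" and S_T_disjoint: "S \<inter> T = {}"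
    and nbhd_Y': "w \<in> Y' \<Longrightarrow> \<exists>s\<in>S. \<exists>t\<in>T. nb w = {s, t}"
    and common_nbr_S_T: "s \<in> S \<Longrightarrow> t \<in> T \<Longrightarrow> \<exists>w. E s w \<and> E t w"
    and inj_on_nbhd: "inj_on nb Y'"
begin

lemma nbhd_Y'_eq_pair:
  assumes "w \<in> Y'" "E p w" "E q w" "p \<noteq> q"
  shows "nb w = {p, q}"
proof -
  obtain s t where "nb w = {s, t}" using nbhd_Y' assms(1) by blast
  moreover have "p \<in> nb w" "q \<in> nb w" using assms(2,3) edge_sym by simp_all
  ultimately show ?thesis using assms(4) by auto
qed

lemma common_nbr_unique:
  assumes "p \<in> Y" "p \<noteq> q" "E p w" "E q w" "E p w'" "E q w'"
  shows "w = w'"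
proof -
  have "w \<in> Y'" "w' \<in> Y'" using assms edge_Y_Y' by blast+
  then have "nb w = nb w'"
    using nbhd_Y'_eq_pair[of w p q] nbhd_Y'_eq_pair[of w' p q] assms by simp
  then show ?thesis using inj_on_nbhd \<open>w \<in> Y'\<close> \<open>w' \<in> Y'\<close> by (meson inj_onD)
qed

lemma common_nbr_iff:
  assumes "p \<in> Y" "q \<in> Y" "p \<noteq> q"
  shows "(\<exists>w. E p w \<and> E q w) \<longleftrightarrow> (p \<in> S \<longleftrightarrow> q \<in> T)"
proof
  assume "\<exists>w. E p w \<and> E q w"
  then obtain w where w: "E p w" "E q w" by blast
  then have "w \<in> Y'" using assms edge_Y_Y' by blast
  then obtain s t where "s \<in> S" "t \<in> T" "nb w = {s, t}" using nbhd_Y' by blast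
  moreover have "nb w = {p, q}" using nbhd_Y'_eq_pair[OF \<open>w \<in> Y'\<close> w assms(3)] .
  ultimately show "p \<in> S \<longleftrightarrow> q \<in> T" using S_T_disjoint by (auto simp: doubleton_eq_iff)
next
  assume "p \<in> S \<longleftrightarrow> q \<in> T"
  then show "\<exists>w. E p w \<and> E q w" using assms Y_eq common_nbr_S_T by blast
qed

lemma nbhd_of_nbr_of_S:
  assumes "s \<in> S" "E s w"
  obtains t where "t \<in> T" "nb w = {s, t}"
proof -
  have "w \<in> Y'" using assms edge_Y_Y' Y_eq by blast
  then obtain s' t where "s' \<in> S" "t \<in> T" "nb w = {s', t}" using nbhd_Y' by blast
  moreover have "s \<in> nb w" using assms(2) edge_sym by simp
  ultimately have "s = s'" using assms(1) S_T_disjoint by auto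
  then show ?thesis using that \<open>t \<in> T\<close> \<open>nb w = {s', t}\<close> by blast
qed

lemma card_nbhd_S:
  assumes "s \<in> S"
  shows "card (nb s) = card T"
proof -
  define other where "other w = the_elem (nb w - {s})" for w
  have other: "other w = t" if "nb w = {s, t}" "t \<in> T" for w t
  proof -
    have "s \<noteq> t" using that(2) assms S_T_disjoint by blast
    then have "nb w - {s} = {t}" using that(1) by blast
    then show ?thesis by (simp add: other_def)
  qed
  have "bij_betw other (nb s) T"
  proof (rule bij_betw_imageI)
    show "inj_on other (nb s)"
    proof (rule inj_onI)
      fix w w' assume "w \<in> nb s" "w' \<in> nb s" "other w = other w'"
      obtain t where "t \<in> T" "nb w = {s, t}"
        using nbhd_of_nbr_of_S[OF assms] \<open>w \<in> nb s\<close> by auto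
      moreover obtain t' where "t' \<in> T" "nb w' = {s, t'}"
        using nbhd_of_nbr_of_S[OF assms] \<open>w' \<in> nb s\<close> by auto
      moreover have "w \<in> Y'" "w' \<in> Y'" using \<open>w \<in> nb s\<close> \<open>w' \<in> nb s\<close> assms Y_eq edge_Y_Y' by auto
      moreover have "t = t'"
        using other calculation(1-4) \<open>other w = other w'\<close> by metis
      ultimately show "w = w'" using inj_onD[OF inj_on_nbhd] by metis
    qed
    show "other ` nb s = T"
    proof (intro equalityI subsetI)
      fix t assume "t \<in> other ` nb s"
      then obtain w where "E s w" "t = other w" by auto
      then show "t \<in> T" using nbhd_of_nbr_of_S[OF assms \<open>E s w\<close>] other by metis
    next
      fix t assume "t \<in> T"
      then obtain w where "E s w" "E t w" using common_nbr_S_T assms by blast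
      moreover have "s \<noteq> t" using assms \<open>t \<in> T\<close> S_T_disjoint by blast
      ultimately have "nb w = {s, t}" using nbhd_Y'_eq_pair edge_Y_Y' assms Y_eq by blast
      then have "other w = t" using other \<open>t \<in> T\<close> by blast
      then show "t \<in> other ` nb s" using \<open>E s w\<close> by (metis imageI mem_nbhd_iff)
    qed
  qed
  then show ?thesis by (rule bij_betw_same_card)
qed

sublocale swap: complete_bipartite_subdivision V E Y Y' T S
proof
  show "w \<in> Y' \<Longrightarrow> \<exists>t\<in>T. \<exists>s\<in>S. nb w = {t, s}" for w
    using nbhd_Y' by (metis insert_commute)
  show "t \<in> T \<Longrightarrow> s \<in> S \<Longrightarrow> \<exists>w. E t w \<and> E s w" for s t
    using common_nbr_S_T by blast
qed (use Y_eq S_T_disjoint inj_on_nbhd in auto)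

lemma card_nbhd_T: "t \<in> T \<Longrightarrow> card (nb t) = card S"
  by (rule swap.card_nbhd_S)

lemma dist_opposite_parts:
  assumes "p \<in> Y" "q \<in> Y" "p \<in> S \<longleftrightarrow> q \<in> T"
  shows "d p q = 2"
proof -
  have "p \<noteq> q" using assms S_T_disjoint Y_eq by blast
  then show ?thesis
    using common_nbr_iff[OF assms(1,2)] assms dist_eq_2_iff_common_nbr Y_in_V by blast
qed

lemma c_num_2_Y':
  assumes "w \<in> Y'" "z \<in> sphere V E w 2"
  shows "c_num V E 2 w z = 1"
proof -
  have "w \<in> V" "z \<in> V" "d w z = 2" using assms Y'_in_V by auto
  then obtain r where "w \<noteq> z" "E w r" "E z r" using dist_eq_2_iff_common_nbr by blast
  have "sphere V E w 1 \<inter> nb z = {r}"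
  proof (intro equalityI subsetI)
    fix r' assume "r' \<in> sphere V E w 1 \<inter> nb z"
    then have "E w r'" "E z r'" using sphere_1[OF \<open>w \<in> V\<close>] edge_sym by auto
    then show "r' \<in> {r}"
      using common_nbr_unique[of r r' w z] \<open>E w r\<close> \<open>E z r\<close> \<open>w \<noteq> z\<close> edge_sym
        edge_Y'_Y[OF \<open>E w r\<close> \<open>w \<in> Y'\<close>] by blast
  qed (use \<open>E w r\<close> \<open>E z r\<close> edge_sym sphere_1[OF \<open>w \<in> V\<close>] in auto)
  then show ?thesis by (simp add: c_num_def)
qed

lemma no_Y_triple_at_dist_2:
  assumes "x \<in> Y" "y \<in> V" "z \<in> V" "d x y = 2" "d x z = 2" "d y z = 2"
  shows False
proof -
  have "x \<in> V" using assms(1) Y_in_V by blast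
  then have "y \<in> Y" "z \<in> Y"
    using dist_parity[OF \<open>x \<in> V\<close>] assms by simp_all
  have "x \<in> S \<longleftrightarrow> y \<in> T" "x \<in> S \<longleftrightarrow> z \<in> T" "y \<in> S \<longleftrightarrow> z \<in> T"
    using common_nbr_iff dist_eq_2_iff_common_nbr assms \<open>x \<in> V\<close> \<open>y \<in> Y\<close> \<open>z \<in> Y\<close> by metis+
  then show False using \<open>x \<in> Y\<close> \<open>y \<in> Y\<close> \<open>z \<in> Y\<close> Y_eq S_T_disjoint by blast
qed

lemma nbhd_inter_sphere_2_empty:
  assumes "x \<in> Y" "y \<in> V" "z \<in> V" "d x y = 2" "d x z = 3" "d y z = 3"
  shows "nb x \<inter> nb y \<inter> sphere V E z 2 = {}"
proof (rule ccontr)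
  assume "nb x \<inter> nb y \<inter> sphere V E z 2 \<noteq> {}"
  then obtain w where w: "E x w" "E y w" "w \<in> V" "d z w = 2" by auto
  then obtain r where "E z r" "E w r" using dist_eq_2_iff_common_nbr assms(3) by blast
  have "w \<in> Y'" using edge_Y_Y' w assms(1) by blast
  moreover have "x \<noteq> y" using assms(4) by auto
  ultimately have "nb w = {x, y}" using nbhd_Y'_eq_pair w by blast
  moreover have "r \<in> nb w" using \<open>E w r\<close> by simp
  ultimately have "E x z \<or> E y z" using \<open>E z r\<close> edge_sym by auto
  then show False using dist_eq_1_iff[of x z] dist_eq_1_iff[of y z] assms Y_in_V by auto
qed

end

locale Knn_subdivision = complete_bipartite_subdivision +
  assumes card_S_eq_card_T: "card S = card T" and two_le_card_S: "2 \<le> card S"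
begin

lemma finite_S: "finite S" and finite_T: "finite T"
  using finite_V V_eq Y_eq by (simp_all add: finite_subset)

lemma ex_other_in_S: "\<exists>s'\<in>S. s' \<noteq> s" and ex_other_in_T: "\<exists>t'\<in>T. t' \<noteq> t"
  using two_le_card_S card_S_eq_card_T ex_other_of_two_le_card by metis+

lemma ex_opposite_part: "p \<in> Y \<Longrightarrow> \<exists>q\<in>Y. p \<in> S \<longleftrightarrow> q \<in> T"
  using ex_other_in_S ex_other_in_T Y_eq S_T_disjoint by blast

lemma ex_same_part: "p \<in> Y \<Longrightarrow> \<exists>q\<in>Y. q \<noteq> p \<and> (p \<in> S \<longleftrightarrow> q \<in> S)"
  using ex_other_in_S ex_other_in_T Y_eq S_T_disjoint by blast

lemma dist_same_part:
  assumes "p \<in> Y" "q \<in> Y" "p \<noteq> q" "p \<in> S \<longleftrightarrow> q \<in> S"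
  shows "d p q = 4"
proof -
  have V: "p \<in> V" "q \<in> V" using assms Y_in_V by auto
  obtain r where "r \<in> Y" "p \<in> S \<longleftrightarrow> r \<in> T" using ex_opposite_part assms(1) by blast
  moreover have "r \<in> S \<longleftrightarrow> q \<in> T" using calculation assms(2,4) Y_eq S_T_disjoint by auto
  ultimately have "d p r = 2" "d r q = 2" using dist_opposite_parts assms(1,2) by simp_all
  then have "d p q \<le> 4" using dist_triangle[of p r q] V Y_in_V \<open>r \<in> Y\<close> by simp
  moreover have "even (d p q)" using dist_parity[OF V] assms by simp
  moreover have "d p q \<noteq> 0" using dist_eq_0_iff[OF V] assms(3) by simp
  moreover have "d p q \<noteq> 2"
  proof -
    have "\<not> (p \<in> S \<longleftrightarrow> q \<in> T)" using assms(1,2,4) Y_eq S_T_disjoint by blast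
    then show ?thesis using common_nbr_iff[OF assms(1-3)] dist_eq_2_iff_common_nbr[OF V] by simp
  qed
  ultimately show ?thesis by (elim evenE) presburger
qed

lemma dist_Y_le_4:
  assumes "x \<in> Y" "v \<in> V"
  shows "d x v \<le> 4"
proof (cases "v \<in> Y")
  case True
  consider "v = x" | "v \<noteq> x" "x \<in> S \<longleftrightarrow> v \<in> S" | "x \<in> S \<longleftrightarrow> v \<in> T"
    using True assms(1) Y_eq S_T_disjoint by blast
  then show ?thesis
    using dist_same_part[OF assms(1) True] dist_opposite_parts[OF assms(1) True] by cases auto
next
  case False
  then have "v \<in> Y'" using assms(2) V_eq by blast
  then obtain s t where "s \<in> S" "t \<in> T" "nb v = {s, t}" using nbhd_Y' by blast
  moreover have "s \<in> nb v" "t \<in> nb v" using \<open>nb v = {s, t}\<close> by simp_all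
  then have "E s v" "E t v" by (meson edge_sym mem_nbhd_iff)+
  ultimately obtain p where p: "p \<in> Y" "x \<in> S \<longleftrightarrow> p \<in> T" "E p v"
    using Y_eq S_T_disjoint assms(1) by (cases "x \<in> S") auto
  then have "d x p = 2" "d p v = 1"
    using dist_opposite_parts assms dist_eq_1_iff Y_in_V by auto
  then show ?thesis using dist_triangle[of x p v] assms p(1) Y_in_V by simp
qed

lemma ecc_Y: "x \<in> Y \<Longrightarrow> ecc V E x = 4"
proof -
  assume "x \<in> Y"
  obtain w where "w \<in> V" "d x w = ecc V E x" using ecc_attained by blast
  then have "ecc V E x \<le> 4" using dist_Y_le_4 \<open>x \<in> Y\<close> by metis
  moreover obtain q where "q \<in> Y" "q \<noteq> x" "x \<in> S \<longleftrightarrow> q \<in> S"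
    using ex_same_part \<open>x \<in> Y\<close> by blast
  then have "d x q = 4" using dist_same_part \<open>x \<in> Y\<close> by simp
  then have "4 \<le> ecc V E x" using dist_le_ecc[of q x] Y_in_V \<open>q \<in> Y\<close> by simp
  ultimately show ?thesis by simp
qed

lemma two_Y_homogeneous_4: "two_Y_homogeneous V E Y Y' 4"
  unfolding two_Y_homogeneous_4_iff
proof (intro conjI exI[of _ 0] ballI impI)
  show "x \<in> Y \<Longrightarrow> ecc V E x = 4" for x by (rule ecc_Y)
  show "card (nb x \<inter> nb y \<inter> nb z) = 0"
    if "x \<in> Y" "y \<in> V" "z \<in> V" "d x y = 2" "d x z = 2" "d y z = 2" for x y z
    using no_Y_triple_at_dist_2 that by blast
  show "card (nb x \<inter> nb y \<inter> sphere V E z 2) = 0"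
    if "x \<in> Y" "y \<in> V" "z \<in> V" "d x y = 2" "d x z = 3" "d y z = 3" for x y z
    using nbhd_inter_sphere_2_empty that by simp
qed

end

locale Knn_subdivision_labelling = Knn_subdivision +
  fixes h :: "'a \<Rightarrow> nat"
  assumes bij_S: "bij_betw h S {0..<card S}"
    and bij_T: "bij_betw h T {card S..<2 * card S}"
begin

definition iso :: "'a \<Rightarrow> nat + nat set" where
  "iso v = (if v \<in> Y then Inl (h v) else Inr (h ` nb v))"

lemma iso_Y: "p \<in> Y \<Longrightarrow> iso p = Inl (h p)"
  by (simp add: iso_def)

lemma iso_Y': "w \<in> Y' \<Longrightarrow> iso w = Inr (h ` nb w)"
  using Y_Y'_disjoint by (auto simp: iso_def)

lemma bij_Y: "bij_betw h Y (Knn_V (card S))"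
proof -
  have "{0..<card S} \<union> {card S..<2 * card S} = {0..<2 * card S}" by auto
  then show ?thesis
    using bij_betw_combine[OF bij_S bij_T] Y_eq by (simp add: Knn_V_def)
qed

lemma label_lt_iff: "p \<in> Y \<Longrightarrow> h p < card S \<longleftrightarrow> p \<in> S"
  using bij_betwE[OF bij_S] bij_betwE[OF bij_T] Y_eq by fastforce

lemma Knn_E_label_iff:
  assumes "p \<in> Y" "q \<in> Y"
  shows "Knn_E (card S) (h p) (h q) \<longleftrightarrow> (p \<in> S \<longleftrightarrow> q \<in> T)"
proof -
  have "h p < 2 * card S" "h q < 2 * card S"
    using bij_betwE[OF bij_Y] assms by (auto simp: Knn_V_def)
  moreover have "h p < card S \<longleftrightarrow> p \<in> S" "h q < card S \<longleftrightarrow> q \<notin> T"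
    using label_lt_iff assms Y_eq S_T_disjoint by auto
  ultimately show ?thesis by (auto simp: Knn_E_def)
qed

lemma inj_on_iso: "inj_on iso V"
proof (rule inj_onI)
  fix v w assume "v \<in> V" "w \<in> V" "iso v = iso w"
  consider "v \<in> Y" "w \<in> Y" | "v \<in> Y'" "w \<in> Y'" | "v \<in> Y" "w \<in> Y'" | "v \<in> Y'" "w \<in> Y"
    using \<open>v \<in> V\<close> \<open>w \<in> V\<close> V_eq by blast
  then show "v = w"
  proof cases
    case 1
    then show ?thesis
      using \<open>iso v = iso w\<close> inj_onD[OF bij_betw_imp_inj_on[OF bij_Y]] by (simp add: iso_Y)
  next
    case 2
    have "nb v \<subseteq> Y" "nb w \<subseteq> Y" using 2 edge_Y'_Y by auto
    moreover have "h ` nb v = h ` nb w" using 2 \<open>iso v = iso w\<close> by (simp add: iso_Y')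
    ultimately have "nb v = nb w"
      using inj_on_image_eq_iff[OF bij_betw_imp_inj_on[OF bij_Y]] by blast
    then show ?thesis using 2 inj_on_nbhd by (meson inj_onD)
  qed (use \<open>iso v = iso w\<close> in \<open>simp_all add: iso_Y iso_Y'\<close>)
qed

lemma iso_image_Y: "iso ` Y = Inl ` Knn_V (card S)"
proof -
  have "iso ` Y = Inl ` h ` Y" unfolding image_image using iso_Y by (rule image_cong[OF refl])
  then show ?thesis using bij_betw_imp_surj_on[OF bij_Y] by simp
qed

lemma iso_image_Y': "iso ` Y' = {Inr {u, v} | u v. Knn_E (card S) u v}"
proof (intro equalityI subsetI)
  fix z :: "nat + nat set" assume "z \<in> iso ` Y'"
  then obtain w where "w \<in> Y'" "z = iso w" by blast
  then obtain s t where "s \<in> S" "t \<in> T" "nb w = {s, t}" using nbhd_Y' by blast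
  then have "z = Inr {h s, h t}" using \<open>z = iso w\<close> \<open>w \<in> Y'\<close> by (simp add: iso_Y')
  moreover have "Knn_E (card S) (h s) (h t)" using Knn_E_label_iff \<open>s \<in> S\<close> \<open>t \<in> T\<close> Y_eq by simp
  ultimately show "z \<in> {Inr {u, v} | u v. Knn_E (card S) u v}" by blast
next
  fix z :: "nat + nat set" assume "z \<in> {Inr {u, v} | u v. Knn_E (card S) u v}"
  then obtain u v where "z = Inr {u, v}" "Knn_E (card S) u v" by blast
  moreover have "u \<in> h ` Y" "v \<in> h ` Y"
    using calculation(2) bij_betw_imp_surj_on[OF bij_Y] by (auto simp: Knn_E_def Knn_V_def)
  ultimately obtain p q where pq: "p \<in> Y" "q \<in> Y" "z = Inr {h p, h q}" "p \<in> S \<longleftrightarrow> q \<in> T"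
    using Knn_E_label_iff by blast
  then have "p \<noteq> q" using S_T_disjoint Y_eq by blast
  obtain w where "E p w" "E q w" using common_nbr_iff pq \<open>p \<noteq> q\<close> by blast
  then have "w \<in> Y'" using \<open>p \<in> Y\<close> edge_Y_Y' by blast
  then have "iso w = z"
    using nbhd_Y'_eq_pair \<open>E p w\<close> \<open>E q w\<close> \<open>p \<noteq> q\<close> pq(3) by (simp add: iso_Y')
  then show "z \<in> iso ` Y'" using \<open>w \<in> Y'\<close> by blast
qed

lemma bij_betw_iso: "bij_betw iso V (subdiv_V (Knn_V (card S)) (Knn_E (card S)))"
  unfolding bij_betw_def subdiv_V_def
  using inj_on_iso iso_image_Y iso_image_Y' V_eq by (simp add: image_Un)

lemma edge_iff_iso_Y_Y':
  assumes "x \<in> Y" "w \<in> Y'"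
  shows "E x w \<longleftrightarrow> subdiv_E (Knn_E (card S)) (iso x) (iso w)"
proof -
  obtain s t where st: "s \<in> S" "t \<in> T" "nb w = {s, t}" using nbhd_Y' assms(2) by blast
  have "Knn_E (card S) (h s) (h t)" using Knn_E_label_iff st(1,2) Y_eq by simp
  then have "subdiv_E (Knn_E (card S)) (iso x) (iso w) \<longleftrightarrow> h x \<in> {h s, h t}"
    using subdiv_E_Inl_Inr_iff[OF _ Knn_E_sym] st(3) by (simp add: iso_Y[OF assms(1)] iso_Y'[OF assms(2)])
  also have "\<dots> \<longleftrightarrow> x \<in> {s, t}"
    using inj_on_eq_iff[OF bij_betw_imp_inj_on[OF bij_Y]] assms(1) st(1,2) Y_eq by auto
  also have "\<dots> \<longleftrightarrow> E x w" using st(3) edge_sym by (metis mem_nbhd_iff)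
  finally show ?thesis ..
qed

lemma edge_iff_iso: "x \<in> V \<Longrightarrow> y \<in> V \<Longrightarrow> E x y \<longleftrightarrow> subdiv_E (Knn_E (card S)) (iso x) (iso y)"
proof -
  assume "x \<in> V" "y \<in> V"
  then consider "x \<in> Y" "y \<in> Y" | "x \<in> Y'" "y \<in> Y'" | "x \<in> Y" "y \<in> Y'" | "x \<in> Y'" "y \<in> Y"
    using V_eq by blast
  then show ?thesis
  proof cases
    case 1
    then have "\<not> E x y" using edge_Y_Y' Y_Y'_disjoint by blast
    then show ?thesis using 1 by (simp add: iso_Y subdiv_E_Inl_Inl)
  next
    case 2
    then have "\<not> E x y" using edge_Y'_Y Y_Y'_disjoint by blast
    then show ?thesis using 2 by (simp add: iso_Y' subdiv_E_Inr_Inr)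
  next
    case 3
    then show ?thesis by (rule edge_iff_iso_Y_Y')
  next
    case 4
    then show ?thesis using edge_iff_iso_Y_Y' edge_sym subdiv_E_sym by metis
  qed
qed

end

context Knn_subdivision
begin

lemma ex_Knn_iso:
  "\<exists>f. bij_betw f V (subdiv_V (Knn_V (card S)) (Knn_E (card S))) \<and>
       (\<forall>x\<in>V. \<forall>y\<in>V. E x y \<longleftrightarrow> subdiv_E (Knn_E (card S)) (f x) (f y)) \<and>
       f ` Y = Inl ` Knn_V (card S)"
proof -
  have "card S = card {0..<card S}" "card T = card {card S..<2 * card S}"
    using card_S_eq_card_T by simp_all
  then obtain h\<^sub>S h\<^sub>T where h\<^sub>S: "bij_betw h\<^sub>S S {0..<card S}"
    and h\<^sub>T: "bij_betw h\<^sub>T T {card S..<2 * card S}"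
    using finite_same_card_bij[OF finite_S finite_atLeastLessThan]
      finite_same_card_bij[OF finite_T finite_atLeastLessThan] by metis
  let ?h = "\<lambda>p. if p \<in> S then h\<^sub>S p else h\<^sub>T p"
  have "bij_betw ?h S {0..<card S} \<longleftrightarrow> bij_betw h\<^sub>S S {0..<card S}"
    by (intro bij_betw_cong) simp
  moreover have "bij_betw ?h T {card S..<2 * card S} \<longleftrightarrow> bij_betw h\<^sub>T T {card S..<2 * card S}"
    using S_T_disjoint by (intro bij_betw_cong) auto
  ultimately interpret Knn_subdivision_labelling V E Y Y' S T ?h
    using h\<^sub>S h\<^sub>T by unfold_locales simp_all
  show ?thesis using bij_betw_iso edge_iff_iso iso_image_Y by blast
qed

end

section \<open>Graphs isomorphic to a subdivided \<open>K\<^sub>n\<^sub>,\<^sub>n\<close>\<close>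

locale Knn_subdivision_isomorphism = bipartite_connected_graph +
  fixes n :: nat and f :: "'a \<Rightarrow> nat + nat set"
  assumes two_le_n: "2 \<le> n"
    and bij_f: "bij_betw f V (subdiv_V (Knn_V n) (Knn_E n))"
    and edge_iff_f: "x \<in> V \<Longrightarrow> y \<in> V \<Longrightarrow> E x y \<longleftrightarrow> subdiv_E (Knn_E n) (f x) (f y)"
    and f_image_Y: "f ` Y = Inl ` Knn_V n"
begin

definition label :: "'a \<Rightarrow> nat" where
  "label p = projl (f p)"

definition lower :: "'a set" where
  "lower = {p \<in> Y. label p < n}"

definition upper :: "'a set" where
  "upper = {p \<in> Y. n \<le> label p}"

lemma f_Y: "p \<in> Y \<Longrightarrow> f p = Inl (label p)"
proof -
  assume "p \<in> Y"
  then have "f p \<in> Inl ` Knn_V n" using f_image_Y by blast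
  then show ?thesis by (auto simp: label_def)
qed

lemma bij_label: "bij_betw label Y (Knn_V n)"
proof (rule bij_betw_imageI)
  show "inj_on label Y"
    using f_Y bij_betw_imp_inj_on[OF bij_f] Y_in_V by (metis inj_on_def)
  have "label ` Y = projl ` f ` Y" by (simp add: label_def image_image)
  then show "label ` Y = Knn_V n" using f_image_Y by (simp add: image_image)
qed

lemma f_Y':
  assumes "w \<in> Y'"
  obtains u v where "Knn_E n u v" "f w = Inr {u, v}"
proof -
  have "f w \<in> subdiv_V (Knn_V n) (Knn_E n)" using bij_betwE[OF bij_f] Y'_in_V assms by blast
  moreover have "f w \<notin> f ` Y"
  proof
    assume "f w \<in> f ` Y"
    then obtain p where "p \<in> Y" "f w = f p" by blast
    then have "w = p"
      using inj_onD[OF bij_betw_imp_inj_on[OF bij_f]] assms Y'_in_V Y_in_V by blast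
    then show False using \<open>p \<in> Y\<close> assms Y_Y'_disjoint by blast
  qed
  ultimately show ?thesis using that f_image_Y by (auto simp: subdiv_V_def)
qed

lemma edge_iff_label:
  assumes "p \<in> Y" "w \<in> Y'" "Knn_E n u v" "f w = Inr {u, v}"
  shows "E p w \<longleftrightarrow> label p \<in> {u, v}"
  using edge_iff_f[OF Y_in_V[OF assms(1)] Y'_in_V[OF assms(2)]]
    subdiv_E_Inl_Inr_iff[where R = "Knn_E n", OF assms(3) Knn_E_sym] f_Y[OF assms(1)] assms(4) by simp

lemma nbhd_Y'_subset: "w \<in> Y' \<Longrightarrow> nb w \<subseteq> Y"
  using edge_Y'_Y by auto

lemma f_Y'_label: "w \<in> Y' \<Longrightarrow> f w = Inr (label ` nb w)"
proof -
  assume "w \<in> Y'"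
  then obtain u v where uv: "Knn_E n u v" "f w = Inr {u, v}" using f_Y' by blast
  have "label ` nb w = {u, v}"
  proof (intro equalityI subsetI)
    fix k assume "k \<in> label ` nb w"
    then obtain p where "E w p" "k = label p" by auto
    then show "k \<in> {u, v}"
      using edge_iff_label[OF _ \<open>w \<in> Y'\<close> uv] edge_sym edge_Y'_Y \<open>w \<in> Y'\<close> by blast
  next
    fix k assume "k \<in> {u, v}"
    then have "k \<in> label ` Y"
      using uv(1) bij_betw_imp_surj_on[OF bij_label] by (auto simp: Knn_E_def Knn_V_def)
    then obtain p where "p \<in> Y" "k = label p" by blast
    then have "E w p" using edge_iff_label[OF _ \<open>w \<in> Y'\<close> uv] \<open>k \<in> {u, v}\<close> edge_sym by blast
    then show "k \<in> label ` nb w" using \<open>k = label p\<close> by simp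
  qed
  then show ?thesis using uv(2) by simp
qed

lemma label_image_lower: "label ` lower = {0..<n}"
  and label_image_upper: "label ` upper = {n..<2 * n}"
  using bij_betw_imp_surj_on[OF bij_label] by (force simp: lower_def upper_def Knn_V_def)+

lemma label_lt_2n: "p \<in> Y \<Longrightarrow> label p < 2 * n"
  using bij_betwE[OF bij_label] by (auto simp: Knn_V_def)

lemma nbhd_Y'_lower_upper:
  assumes "w \<in> Y'"
  shows "\<exists>s\<in>lower. \<exists>t\<in>upper. nb w = {s, t}"
proof -
  obtain u v where "Knn_E n u v" "f w = Inr {u, v}" using f_Y' assms by blast
  then have uv: "label ` nb w = {u, v}" using f_Y'_label[OF assms] by simp
  from \<open>Knn_E n u v\<close> consider "u < n" "n \<le> v" "v < 2 * n" | "v < n" "n \<le> u" "u < 2 * n"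
    unfolding Knn_E_def by blast
  then obtain a b where ab: "a < n" "n \<le> b" "b < 2 * n" "label ` nb w = {a, b}"
  proof cases
    case 1
    then show ?thesis using that uv by blast
  next
    case 2
    then show ?thesis using that[of v u] uv by (simp add: insert_commute)
  qed
  moreover have "a \<in> label ` Y" "b \<in> label ` Y"
    using ab bij_betw_imp_surj_on[OF bij_label] by (auto simp: Knn_V_def)
  ultimately obtain s t where st: "s \<in> Y" "t \<in> Y" "a = label s" "b = label t" by blast
  then have "label ` nb w = label ` {s, t}" using ab(4) by simp
  then have "nb w = {s, t}"
    using inj_on_image_eq_iff[OF bij_betw_imp_inj_on[OF bij_label] nbhd_Y'_subset[OF assms], of "{s, t}"]
      st(1,2) by simp
  then show ?thesis using ab st by (auto simp: lower_def upper_def)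
qed

lemma common_nbr_lower_upper:
  assumes "s \<in> lower" "t \<in> upper"
  shows "\<exists>w. E s w \<and> E t w"
proof -
  have "s \<in> Y" "t \<in> Y" using assms by (auto simp: lower_def upper_def)
  have Knn: "Knn_E n (label s) (label t)"
    using assms label_lt_2n \<open>t \<in> Y\<close> by (auto simp: lower_def upper_def Knn_E_def)
  then have "Inr {label s, label t} \<in> f ` V"
    using bij_betw_imp_surj_on[OF bij_f] by (auto simp: subdiv_V_def)
  then obtain w where "w \<in> V" "f w = Inr {label s, label t}" by auto
  moreover have "w \<notin> Y" using calculation(2) f_Y by auto
  ultimately have "w \<in> Y'" using V_eq by blast
  then show ?thesis
    using edge_iff_label[OF _ \<open>w \<in> Y'\<close> Knn \<open>f w = _\<close>] \<open>s \<in> Y\<close> \<open>t \<in> Y\<close> by auto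
qed

sublocale Knn_subdivision V E Y Y' lower upper
proof
  show "Y = lower \<union> upper" "lower \<inter> upper = {}" by (auto simp: lower_def upper_def)
  show "inj_on nb Y'"
  proof (rule inj_onI)
    fix w w' assume "w \<in> Y'" "w' \<in> Y'" "nb w = nb w'"
    then have "f w = f w'" by (simp add: f_Y'_label)
    then show "w = w'"
      using inj_onD[OF bij_betw_imp_inj_on[OF bij_f]] \<open>w \<in> Y'\<close> \<open>w' \<in> Y'\<close> Y'_in_V by blast
  qed
  have "bij_betw label lower {0..<n}" "bij_betw label upper {n..<2 * n}"
    using bij_betw_subset[OF bij_label] label_image_lower label_image_upper
    by (auto simp: lower_def upper_def)
  then have "card lower = n" "card upper = n" by (simp_all add: bij_betw_same_card)
  then show "card lower = card upper" "2 \<le> card lower" using two_le_n by simp_all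
qed (use nbhd_Y'_lower_upper common_nbr_lower_upper in blast)+

end

section \<open>2-\<open>Y\<close>-homogeneous graphs with \<open>D = 4\<close> and \<open>c'\<^sub>2 = 1\<close>\<close>

locale two_Y_homogeneous_D4 = bipartite_connected_graph +
  fixes \<gamma>\<^sub>2 \<gamma>\<^sub>3 :: nat
  assumes dist_regularized: "\<forall>u\<in>V. dist_regularized_vertex V E u"
    and ecc_Y_eq_4: "x \<in> Y \<Longrightarrow> ecc V E x = 4"
    and Y_nonempty: "Y \<noteq> {}"
    and hom2: "x \<in> Y \<Longrightarrow> y \<in> V \<Longrightarrow> z \<in> V \<Longrightarrow> d x y = 2 \<Longrightarrow> d x z = 2 \<Longrightarrow> d y z = 2 \<Longrightarrow>
      card (nb x \<inter> nb y \<inter> nb z) = \<gamma>\<^sub>2"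
    and hom3: "x \<in> Y \<Longrightarrow> y \<in> V \<Longrightarrow> z \<in> V \<Longrightarrow> d x y = 2 \<Longrightarrow> d x z = 3 \<Longrightarrow> d y z = 3 \<Longrightarrow>
      card (nb x \<inter> nb y \<inter> sphere V E z 2) = \<gamma>\<^sub>3"
    and c2_Y': "w \<in> Y' \<Longrightarrow> z \<in> sphere V E w 2 \<Longrightarrow> c_num V E 2 w z = 1"
begin

lemma common_nbrs_determine_Y':
  assumes "w \<in> Y'" "a \<noteq> b" "E a w" "E b w" "E a w'" "E b w'"
  shows "w = w'"
proof (rule ccontr)
  assume "w \<noteq> w'"
  have V: "w \<in> V" "w' \<in> V" using assms(3,5) edge_in_V by auto
  have "E w a" "E w' a" using assms(3,5) edge_sym by auto
  then have "d w w' = 2" using dist_eq_2_iff_common_nbr[OF V] \<open>w \<noteq> w'\<close> by blast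
  then have "card (sphere V E w 1 \<inter> nb w') = 1" using c2_Y'[OF assms(1)] V by (simp add: c_num_def)
  then have "card (nb w \<inter> nb w') = 1" using sphere_1[OF V(1)] by simp
  moreover have "{a, b} \<subseteq> nb w \<inter> nb w'" using assms edge_sym by auto
  then have "card {a, b} \<le> card (nb w \<inter> nb w')" by (intro card_mono) (simp_all add: finite_nbhd)
  ultimately show False using assms(2) by simp
qed

lemma nbhd_inter_eq_singleton:
  assumes "m \<in> Y'" "x \<noteq> y" "E x m" "E y m"
  shows "nb x \<inter> nb y = {m}"
proof (intro equalityI subsetI)
  fix w assume "w \<in> nb x \<inter> nb y"
  then show "w \<in> {m}" using common_nbrs_determine_Y'[OF assms, of w] by simp
qed (use assms(3,4) in simp)

lemma dist_le_4: "x \<in> Y \<Longrightarrow> v \<in> V \<Longrightarrow> d x v \<le> 4"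
  using dist_le_ecc[of v x] ecc_Y_eq_4[of x] by simp

lemma dist_Y_Y'_eq_3:
  assumes "x \<in> Y" "m \<in> Y'" "\<not> E x m"
  shows "d x m = 3"
proof -
  have V: "x \<in> V" "m \<in> V" using assms Y_in_V Y'_in_V by auto
  have "odd (d x m)" using dist_parity[OF V] assms Y_Y'_disjoint by auto
  moreover have "d x m \<noteq> 1" using dist_eq_1_iff[OF V] assms(3) by simp
  moreover have "d x m \<le> 4" using dist_le_4 assms(1) V(2) by blast
  ultimately show ?thesis by (elim oddE) presburger
qed

lemma geodesic_4:
  assumes "x \<in> Y"
  obtains m q n u where "E x m" "E m q" "E q n" "E n u" "d x q = 2" "d x n = 3" "d x u = 4"
proof -
  have xV: "x \<in> V" using assms Y_in_V by blast
  obtain u where u: "u \<in> V" "d x u = Suc 3" using ecc_attained[of x] ecc_Y_eq_4[OF assms] by auto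
  obtain n where n: "E n u" "d x n = Suc 2" using dist_SucE[OF xV u] by auto
  obtain q where q: "E q n" "d x q = Suc 1" using dist_SucE[OF xV edge_in_V(1)[OF n(1)] n(2)] by auto
  obtain m where m: "E m q" "d x m = 1" using dist_SucE[OF xV edge_in_V(1)[OF q(1)]] q(2) by auto
  have "E x m" using dist_eq_1_iff[OF xV edge_in_V(1)[OF m(1)]] m(2) by blast
  then show ?thesis using that m(1) q n u by simp
qed

lemma same_part_same_degree:
  "u \<in> V \<Longrightarrow> v \<in> V \<Longrightarrow> (u \<in> Y \<longleftrightarrow> v \<in> Y) \<Longrightarrow> card (nb u) = card (nb v)"
  using even_dist_same_degree[OF dist_regularized] dist_parity by blast

lemma degree_Y'_ge_2:
  assumes "w \<in> Y'"
  shows "2 \<le> card (nb w)"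
proof -
  obtain x where "x \<in> Y" using Y_nonempty by blast
  then obtain m q n u where "E x m" "E m q" "E q n" "E n u" "d x q = 2" "d x n = 3" "d x u = 4"
    by (rule geodesic_4)
  then have "{x, q} \<subseteq> nb m" "x \<noteq> q" using edge_sym by auto
  then have "card {x, q} \<le> card (nb m)" by (intro card_mono finite_nbhd)
  moreover have "m \<in> Y'" using edge_Y_Y' \<open>E x m\<close> \<open>x \<in> Y\<close> by blast
  then have "card (nb w) = card (nb m)"
    using same_part_same_degree Y'_in_V assms Y_Y'_disjoint by blast
  ultimately show ?thesis using \<open>x \<noteq> q\<close> by simp
qed

lemma hom_consts_eq_1:
  assumes deg3: "\<forall>w\<in>Y'. 3 \<le> card (nb w)"
  shows "\<gamma>\<^sub>2 = 1" and "\<gamma>\<^sub>3 = 1"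
proof -
  obtain x where x: "x \<in> Y" using Y_nonempty by blast
  then obtain m q n u where path: "E x m" "E m q" "E q n" "E n u" "d x q = 2" "d x n = 3" "d x u = 4"
    by (rule geodesic_4)
  have m: "m \<in> Y'" and q: "q \<in> Y" and n: "n \<in> Y'"
    using path x edge_Y_Y' edge_Y'_Y by blast+
  have "x \<noteq> q" using path(5) by auto
  have "m \<noteq> n" using path(1,6) dist_eq_1_iff x Y_in_V edge_in_V by fastforce
  have "card {x, q} < card (nb m)" using deg3[rule_format, OF m] \<open>x \<noteq> q\<close> by simp
  then obtain y where "y \<in> nb m" "y \<notin> {x, q}" using ex_notin_of_card_less[of "{x, q}"] by blast
  then have y: "y \<in> Y" "E y m" "y \<noteq> x" "y \<noteq> q" using m edge_Y'_Y edge_sym by auto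
  have V: "x \<in> V" "y \<in> V" "q \<in> V" "n \<in> V" using x y q n Y_in_V Y'_in_V by auto
  have "E q m" "E n q" using path(2,3) edge_sym by blast+
  have "\<not> E y n" using common_nbrs_determine_Y'[OF m y(4,2) \<open>E q m\<close> _ path(3)] \<open>m \<noteq> n\<close> by blast
  then have "d y n = 3" using dist_Y_Y'_eq_3 y(1) n by blast
  have "d x y = 2" using dist_eq_2_iff_common_nbr[OF V(1,2)] y(3) path(1) y(2) by blast
  have "d y q = 2" using dist_eq_2_iff_common_nbr[OF V(2,3)] y(4) y(2) \<open>E q m\<close> by blast
  have "d n m = 2"
    using dist_eq_2_iff_common_nbr[OF V(4) Y'_in_V[OF m]] \<open>m \<noteq> n\<close> \<open>E n q\<close> path(2) by blast
  have xy: "nb x \<inter> nb y = {m}"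
    using nbhd_inter_eq_singleton[OF m y(3)[symmetric] path(1) y(2)] .
  have "nb x \<inter> nb y \<inter> nb q = {m}" using xy \<open>E q m\<close> by auto
  then show "\<gamma>\<^sub>2 = 1" using hom2[OF x V(2,3) \<open>d x y = 2\<close> path(5) \<open>d y q = 2\<close>] by simp
  have "nb x \<inter> nb y \<inter> sphere V E n 2 = {m}"
    using xy \<open>d n m = 2\<close> Y'_in_V[OF m] by auto
  then show "\<gamma>\<^sub>3 = 1" using hom3[OF x V(2,4) \<open>d x y = 2\<close> path(6) \<open>d y n = 3\<close>] by simp
qed

lemma common_nbr_with_far_Y':
  assumes deg3: "\<forall>w\<in>Y'. 3 \<le> card (nb w)"
    and "q \<in> Y" "n \<in> Y'" "d q n = 3" "L \<in> Y'" "E q L"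
  shows "\<exists>a. E n a \<and> E a L"
proof -
  have V: "q \<in> V" "n \<in> V" "L \<in> V" using assms Y_in_V Y'_in_V by auto
  have "\<not> E q n" using dist_eq_1_iff[OF V(1,2)] assms(4) by simp
  have "card {q} < card (nb L)" using deg3[rule_format, OF assms(5)] by simp
  then obtain y\<^sub>1 where "y\<^sub>1 \<in> nb L" "y\<^sub>1 \<notin> {q}" using ex_notin_of_card_less[of "{q}" "nb L"] by blast
  then have "y\<^sub>1 \<noteq> q" by simp
  have "card {q, y\<^sub>1} < card (nb L)" using deg3[rule_format, OF assms(5)] by (simp add: card_insert_if)
  then obtain y\<^sub>2 where "y\<^sub>2 \<in> nb L" "y\<^sub>2 \<notin> {q, y\<^sub>1}"
    using ex_notin_of_card_less[of "{q, y\<^sub>1}" "nb L"] by blast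
  have "\<exists>y. E y L \<and> y \<noteq> q \<and> \<not> E y n"
  proof (rule ccontr)
    assume "\<not> ?thesis"
    moreover have "E y\<^sub>1 L" "E y\<^sub>2 L" using \<open>y\<^sub>1 \<in> nb L\<close> \<open>y\<^sub>2 \<in> nb L\<close> edge_sym by auto
    ultimately have "E y\<^sub>1 n" "E y\<^sub>2 n" using \<open>y\<^sub>1 \<noteq> q\<close> \<open>y\<^sub>2 \<notin> {q, y\<^sub>1}\<close> by auto
    then have "L = n"
      using common_nbrs_determine_Y'[OF assms(5), of y\<^sub>1 y\<^sub>2] \<open>E y\<^sub>1 L\<close> \<open>E y\<^sub>2 L\<close> \<open>y\<^sub>2 \<notin> {q, y\<^sub>1}\<close>
      by auto
    then show False using assms(6) \<open>\<not> E q n\<close> by simp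
  qed
  then obtain y where y: "E y L" "y \<noteq> q" "\<not> E y n" by blast
  have "y \<in> Y" using edge_Y'_Y[OF y(1)[THEN edge_sym] assms(5)] .
  have "d q y = 2" using dist_eq_2_iff_common_nbr V(1) Y_in_V[OF \<open>y \<in> Y\<close>] y assms(6) by blast
  moreover have "d y n = 3" using dist_Y_Y'_eq_3 \<open>y \<in> Y\<close> assms(3) y(3) by blast
  ultimately have "card (nb q \<inter> nb y \<inter> sphere V E n 2) = 1"
    using hom3[OF assms(2) Y_in_V[OF \<open>y \<in> Y\<close>] V(2)] assms(4) hom_consts_eq_1(2)[OF deg3] by simp
  then obtain w where w: "E q w" "E y w" "d n w = 2" "w \<in> V"
    by (metis (no_types, lifting) IntE card_1_singletonE insertI1 mem_nbhd_iff mem_sphere_iff)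
  have "w = L"
    using common_nbrs_determine_Y'[OF assms(5) y(2)[symmetric] assms(6) y(1) w(1,2)] by simp
  then show ?thesis using w(3) dist_eq_2_iff_common_nbr V(2,3) edge_sym by metis
qed

lemma degree_Y'_le_2:
  assumes "w \<in> Y'"
  shows "card (nb w) \<le> 2"
proof (rule ccontr)
  assume "\<not> ?thesis"
  have deg3: "\<forall>v\<in>Y'. 3 \<le> card (nb v)"
  proof
    fix v assume "v \<in> Y'"
    then have "card (nb v) = card (nb w)"
      using same_part_same_degree Y'_in_V assms Y_Y'_disjoint by blast
    then show "3 \<le> card (nb v)" using \<open>\<not> card (nb w) \<le> 2\<close> by simp
  qed
  obtain x where x: "x \<in> Y" using Y_nonempty by blast
  then obtain m q n u where path: "E x m" "E m q" "E q n" "E n u" "d x q = 2" "d x n = 3" "d x u = 4"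
    by (rule geodesic_4)
  have m: "m \<in> Y'" and q: "q \<in> Y" and n: "n \<in> Y'"
    using path x edge_Y_Y' edge_Y'_Y by blast+
  have "m \<noteq> n" using path(1,6) dist_eq_1_iff x Y_in_V edge_in_V by fastforce
  obtain m' q' n\<^sub>1 u' where path': "E q m'" "E m' q'" "E q' n\<^sub>1" "E n\<^sub>1 u'"
    "d q q' = 2" "d q n\<^sub>1 = 3" "d q u' = 4"
    by (rule geodesic_4[OF q])
  have "n\<^sub>1 \<in> Y'" using path'(1-3) q edge_Y_Y' edge_Y'_Y by blast
  have "\<not> E q n\<^sub>1" using dist_eq_1_iff Y_in_V[OF q] Y'_in_V[OF \<open>n\<^sub>1 \<in> Y'\<close>] path'(6) by fastforce
  have "E q m" "E q n" using path(2,3) edge_sym by blast+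
  obtain a where a: "E n\<^sub>1 a" "E a m"
    using common_nbr_with_far_Y'[OF deg3 q \<open>n\<^sub>1 \<in> Y'\<close> path'(6) m \<open>E q m\<close>] by blast
  obtain b where b: "E n\<^sub>1 b" "E b n"
    using common_nbr_with_far_Y'[OF deg3 q \<open>n\<^sub>1 \<in> Y'\<close> path'(6) n \<open>E q n\<close>] by blast
  have "a \<noteq> q" "b \<noteq> q" using a(1) b(1) \<open>\<not> E q n\<^sub>1\<close> edge_sym by blast+
  have "a \<noteq> b"
  proof
    assume "a = b"
    then have "m = n" using common_nbrs_determine_Y'[OF m \<open>a \<noteq> q\<close> a(2) \<open>E q m\<close>] b(2) \<open>E q n\<close> by blast
    then show False using \<open>m \<noteq> n\<close> by blast
  qed
  have "E a n\<^sub>1" "E b n\<^sub>1" using a(1) b(1) edge_sym by blast+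
  then have "a \<in> Y" "b \<in> Y" using edge_Y'_Y \<open>n\<^sub>1 \<in> Y'\<close> a(1) b(1) by blast+
  have V: "a \<in> V" "b \<in> V" "q \<in> V" using \<open>a \<in> Y\<close> \<open>b \<in> Y\<close> q Y_in_V by auto
  have "d a b = 2" using dist_eq_2_iff_common_nbr[OF V(1,2)] \<open>a \<noteq> b\<close> \<open>E a n\<^sub>1\<close> \<open>E b n\<^sub>1\<close> by blast
  moreover have "d a q = 2" using dist_eq_2_iff_common_nbr[OF V(1,3)] \<open>a \<noteq> q\<close> a(2) \<open>E q m\<close> by blast
  moreover have "d b q = 2" using dist_eq_2_iff_common_nbr[OF V(2,3)] \<open>b \<noteq> q\<close> b(2) \<open>E q n\<close> by blast
  ultimately have "card (nb a \<inter> nb b \<inter> nb q) = 1"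
    using hom2[OF \<open>a \<in> Y\<close> V(2,3)] hom_consts_eq_1(1)[OF deg3] by simp
  then obtain L where "L \<in> nb a \<inter> nb b \<inter> nb q" by (metis card_1_singletonE insertI1)
  then have "E a L" "E b L" "E q L" by simp_all
  then have "n\<^sub>1 = L"
    using common_nbrs_determine_Y'[OF \<open>n\<^sub>1 \<in> Y'\<close> \<open>a \<noteq> b\<close> \<open>E a n\<^sub>1\<close> \<open>E b n\<^sub>1\<close>] by blast
  then show False using \<open>E q L\<close> \<open>\<not> E q n\<^sub>1\<close> by blast
qed

lemma nbhd_Y'_eq:
  assumes "w \<in> Y'" "E w a" "E w b" "a \<noteq> b"
  shows "nb w = {a, b}"
proof -
  have "card (nb w) = 2" using degree_Y'_ge_2 degree_Y'_le_2 assms(1) by (simp add: le_antisym)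
  moreover have "{a, b} \<subseteq> nb w" using assms(2,3) by simp
  moreover have "card {a, b} = 2" using assms(4) by simp
  ultimately show ?thesis using card_subset_eq[OF finite_nbhd] by metis
qed

text \<open>By distance-regularity at \<open>x\<close> it suffices to bound \<open>c\<^sub>3\<close> at the third vertex of a
  geodesic of length 4, whose other neighbour lies at distance 4.\<close>

lemma card_sphere_2_nbhd_le_1:
  assumes "x \<in> Y" "w \<in> V" "d x w = 3"
  shows "card (sphere V E x 2 \<inter> nb w) \<le> 1"
proof -
  obtain m q n u where path: "E x m" "E m q" "E q n" "E n u" "d x q = 2" "d x n = 3" "d x u = 4"
    by (rule geodesic_4[OF assms(1)])
  have xV: "x \<in> V" and nV: "n \<in> V" using assms(1) Y_in_V path(3) edge_in_V by auto
  have "n \<in> Y'" using path(1-3) assms(1) edge_Y_Y' edge_Y'_Y by blast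
  have "E n q" using path(3) edge_sym by blast
  moreover have "q \<noteq> u" using path(5,7) by auto
  ultimately have "nb n = {q, u}" using nbhd_Y'_eq[OF \<open>n \<in> Y'\<close> _ path(4)] by blast
  then have "sphere V E x 2 \<inter> nb n \<subseteq> {q}" using path(7) by auto
  then have "card (sphere V E x 2 \<inter> nb n) \<le> card {q}" by (intro card_mono) simp_all
  moreover have "c_num V E 3 x w = c_num V E 3 x n"
    using dist_regularized_c_num_eq[of x 3 w n] dist_regularized xV ecc_Y_eq_4[OF assms(1)]
      assms(2,3) nV path(6) by simp
  ultimately show ?thesis by (simp add: c_num_def)
qed

end

lemma (in bipartite_connected_graph) ex_two_Y_homogeneous_D4:
  assumes "\<forall>u\<in>V. dist_regularized_vertex V E u" "Y \<noteq> {}" "two_Y_homogeneous V E Y Y' 4"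
    and "\<forall>w\<in>Y'. \<forall>z\<in>sphere V E w 2. c_num V E 2 w z = 1"
  shows "\<exists>\<gamma>\<^sub>2 \<gamma>\<^sub>3. two_Y_homogeneous_D4 V E Y Y' \<gamma>\<^sub>2 \<gamma>\<^sub>3"
proof -
  obtain \<gamma>\<^sub>2 \<gamma>\<^sub>3 where
    "\<forall>x\<in>Y. \<forall>y\<in>V. \<forall>z\<in>V. d x y = 2 \<longrightarrow> d x z = 2 \<longrightarrow> d y z = 2 \<longrightarrow>
      card (nb x \<inter> nb y \<inter> nb z) = \<gamma>\<^sub>2"
    "\<forall>x\<in>Y. \<forall>y\<in>V. \<forall>z\<in>V. d x y = 2 \<longrightarrow> d x z = 3 \<longrightarrow> d y z = 3 \<longrightarrow>
      card (nb x \<inter> nb y \<inter> sphere V E z 2) = \<gamma>\<^sub>3"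
    using assms(3) unfolding two_Y_homogeneous_4_iff by blast
  then have "two_Y_homogeneous_D4 V E Y Y' \<gamma>\<^sub>2 \<gamma>\<^sub>3"
    using assms two_Y_homogeneous_4_iff by unfold_locales blast+
  then show ?thesis by blast
qed

locale two_Y_homogeneous_D4_pointed = two_Y_homogeneous_D4 +
  fixes x\<^sub>0 :: 'a
  assumes x\<^sub>0_in_Y: "x\<^sub>0 \<in> Y"
begin

definition B :: "'a set" where
  "B = {y \<in> Y. d x\<^sub>0 y = 2}"

definition A :: "'a set" where
  "A = Y - B"

lemma x\<^sub>0_in_A: "x\<^sub>0 \<in> A"
  using x\<^sub>0_in_Y by (simp add: A_def B_def)

lemma x\<^sub>0_in_V: "x\<^sub>0 \<in> V"
  using x\<^sub>0_in_Y Y_in_V by blast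

lemma dist_x\<^sub>0_Y: "y \<in> Y \<Longrightarrow> d x\<^sub>0 y = 0 \<or> d x\<^sub>0 y = 2 \<or> d x\<^sub>0 y = 4"
proof -
  assume "y \<in> Y"
  then have "even (d x\<^sub>0 y)" "d x\<^sub>0 y \<le> 4"
    using dist_parity[OF x\<^sub>0_in_V] dist_le_4[OF x\<^sub>0_in_Y] x\<^sub>0_in_Y Y_in_V by auto
  then show ?thesis by (elim evenE) presburger
qed

lemma nbhd_Y'_A_B:
  assumes "w \<in> Y'"
  shows "\<exists>a\<in>A. \<exists>b\<in>B. nb w = {a, b}"
proof -
  obtain p q where "p \<noteq> q" "nb w = {p, q}"
    using degree_Y'_ge_2 degree_Y'_le_2 assms card_2_iff by (metis le_antisym)
  then have pq: "E w p" "E w q" by auto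
  then have "p \<in> Y" "q \<in> Y" using edge_Y'_Y assms by blast+
  have wV: "w \<in> V" using assms Y'_in_V by blast
  have "p \<in> B \<or> q \<in> B"
  proof (cases "E x\<^sub>0 w")
    case True
    then have "x\<^sub>0 \<in> nb w" using edge_sym by simp
    then have "x\<^sub>0 = p \<or> x\<^sub>0 = q" using \<open>nb w = {p, q}\<close> by simp
    moreover have "d x\<^sub>0 v = 2" if "E w v" "v \<noteq> x\<^sub>0" for v
      using that True dist_eq_2_iff_common_nbr[OF x\<^sub>0_in_V] edge_sym edge_in_V by blast
    ultimately show ?thesis using pq \<open>p \<noteq> q\<close> \<open>p \<in> Y\<close> \<open>q \<in> Y\<close> by (auto simp: B_def)
  next
    case False
    then have "d x\<^sub>0 w = Suc 2" using dist_Y_Y'_eq_3 x\<^sub>0_in_Y assms by simp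
    then obtain v where "E v w" "d x\<^sub>0 v = 2" using dist_SucE[OF x\<^sub>0_in_V wV] by blast
    moreover have "v \<in> nb w" using \<open>E v w\<close> edge_sym by simp
    then have "v = p \<or> v = q" using \<open>nb w = {p, q}\<close> by simp
    ultimately show ?thesis using \<open>p \<in> Y\<close> \<open>q \<in> Y\<close> by (auto simp: B_def)
  qed
  moreover have "\<not> (p \<in> B \<and> q \<in> B)"
  proof
    assume "p \<in> B \<and> q \<in> B"
    then have "{p, q} \<subseteq> sphere V E x\<^sub>0 2 \<inter> nb w"
      using \<open>nb w = {p, q}\<close> Y_in_V by (auto simp: B_def)
    then have "card {p, q} \<le> card (sphere V E x\<^sub>0 2 \<inter> nb w)"
      by (intro card_mono) (simp_all add: finite_nbhd)
    moreover have "\<not> E x\<^sub>0 w"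
    proof
      assume "E x\<^sub>0 w"
      then have "x\<^sub>0 \<in> nb w" using edge_sym by simp
      then show False using \<open>p \<in> B \<and> q \<in> B\<close> \<open>nb w = {p, q}\<close> by (auto simp: B_def)
    qed
    then have "d x\<^sub>0 w = 3" using dist_Y_Y'_eq_3 x\<^sub>0_in_Y assms by simp
    ultimately show False using card_sphere_2_nbhd_le_1[OF x\<^sub>0_in_Y wV] \<open>p \<noteq> q\<close> by simp
  qed
  ultimately consider "p \<in> A" "q \<in> B" | "q \<in> A" "p \<in> B"
    using \<open>p \<in> Y\<close> \<open>q \<in> Y\<close> unfolding A_def by blast
  then show ?thesis
  proof cases
    case 1
    then show ?thesis using \<open>nb w = {p, q}\<close> by blast
  next
    case 2
    moreover have "nb w = {q, p}" using \<open>nb w = {p, q}\<close> by (simp add: insert_commute)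
    ultimately show ?thesis by blast
  qed
qed

lemma no_common_nbr_in_B:
  assumes "b \<in> B" "c \<in> B" "b \<noteq> c" "E b w" "E c w"
  shows False
proof -
  have "w \<in> Y'" using assms(1,4) edge_Y_Y' by (auto simp: B_def)
  then obtain a' b' where "a' \<in> A" "b' \<in> B" "nb w = {a', b'}" using nbhd_Y'_A_B by blast
  moreover have "b \<in> nb w" "c \<in> nb w" using assms(4,5) edge_sym by simp_all
  ultimately have "b = b'" "c = b'" using assms(1,2) by (auto simp: A_def)
  then show False using assms(3) by simp
qed

lemma common_nbr_A_B:
  assumes "a \<in> A" "b \<in> B"
  shows "\<exists>w. E a w \<and> E b w"
proof (cases "a = x\<^sub>0")
  case True
  then show ?thesis
    using assms(2) dist_eq_2_iff_common_nbr[OF x\<^sub>0_in_V] Y_in_V by (auto simp: B_def)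
next
  case False
  have "a \<in> Y" "b \<in> Y" and "a \<notin> B" using assms by (auto simp: A_def B_def)
  have aV: "a \<in> V" and bV: "b \<in> V" using \<open>a \<in> Y\<close> \<open>b \<in> Y\<close> Y_in_V by auto
  have "d x\<^sub>0 a \<noteq> 0" "d x\<^sub>0 a \<noteq> 2"
    using False dist_eq_0_iff[OF x\<^sub>0_in_V aV] \<open>a \<in> Y\<close> \<open>a \<notin> B\<close> by (auto simp: B_def)
  then have "d x\<^sub>0 a = Suc 3" using dist_x\<^sub>0_Y \<open>a \<in> Y\<close> by fastforce
  then obtain n where "E n a" "d x\<^sub>0 n = 3" using dist_SucE[OF x\<^sub>0_in_V aV] by blast
  then have "n \<in> Y'" using edge_Y_Y' edge_sym \<open>a \<in> Y\<close> by blast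
  then obtain a' c where "a' \<in> A" "c \<in> B" "nb n = {a', c}" using nbhd_Y'_A_B by blast
  moreover have "a \<in> nb n" using \<open>E n a\<close> by simp
  ultimately have nb_n: "nb n = {a, c}" using assms(1) by (auto simp: A_def)
  show ?thesis
  proof (cases "b = c")
    case True
    have "c \<in> nb n" using nb_n by simp
    then have "E c n" using edge_sym by simp
    then show ?thesis using True \<open>E n a\<close> edge_sym by blast
  next
    case False
    have "b \<noteq> a" using assms by (auto simp: A_def)
    then have "b \<notin> nb n" using False nb_n by simp
    then have "\<not> E b n" using edge_sym by auto
    then have "d b n = Suc 2" using dist_Y_Y'_eq_3 \<open>b \<in> Y\<close> \<open>n \<in> Y'\<close> by simp
    then obtain v where "E v n" "d b v = 2" using dist_SucE[OF bV Y'_in_V[OF \<open>n \<in> Y'\<close>]] by blast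
    moreover have "v \<in> nb n" using \<open>E v n\<close> edge_sym by simp
    ultimately have "v = a \<or> v = c" "v \<in> V" using nb_n edge_in_V by auto
    moreover have "\<not> (\<exists>w. E b w \<and> E c w)" using no_common_nbr_in_B assms(2) \<open>c \<in> B\<close> False by blast
    ultimately have "d b a = 2" using \<open>d b v = 2\<close> dist_eq_2_iff_common_nbr[OF bV] by blast
    then show ?thesis using dist_eq_2_iff_common_nbr[OF bV aV] by blast
  qed
qed

lemma complete_bipartite_subdivision_A_B: "complete_bipartite_subdivision V E Y Y' A B"
proof
  show "Y = A \<union> B" "A \<inter> B = {}" by (auto simp: A_def B_def)
  show "inj_on nb Y'"
  proof (rule inj_onI)
    fix w w' assume "w \<in> Y'" "w' \<in> Y'" "nb w = nb w'"
    obtain a b where "a \<in> A" "b \<in> B" "nb w = {a, b}" using nbhd_Y'_A_B \<open>w \<in> Y'\<close> by blast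
    then have "a \<noteq> b" by (auto simp: A_def)
    have "a \<in> nb w" "b \<in> nb w" "a \<in> nb w'" "b \<in> nb w'"
      using \<open>nb w = {a, b}\<close> \<open>nb w = nb w'\<close> by auto
    then have "E a w" "E b w" "E a w'" "E b w'" by (meson edge_sym mem_nbhd_iff)+
    then show "w = w'" using common_nbrs_determine_Y'[OF \<open>w \<in> Y'\<close> \<open>a \<noteq> b\<close>] by blast
  qed
qed (use nbhd_Y'_A_B common_nbr_A_B in blast)+

lemma Knn_subdivision_A_B: "Knn_subdivision V E Y Y' A B"
proof -
  interpret complete_bipartite_subdivision V E Y Y' A B by (rule complete_bipartite_subdivision_A_B)
  show ?thesis
  proof
    obtain m b where "E x\<^sub>0 m" "E m b" "d x\<^sub>0 b = 2"
      using geodesic_4[OF x\<^sub>0_in_Y] by metis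
    then have "b \<in> Y" using x\<^sub>0_in_Y edge_Y_Y' edge_Y'_Y by blast
    then have "b \<in> B" using \<open>d x\<^sub>0 b = 2\<close> by (simp add: B_def)
    have "card A = card (nb b)" using card_nbhd_T[OF \<open>b \<in> B\<close>] by simp
    also have "\<dots> = card (nb x\<^sub>0)"
      using same_part_same_degree x\<^sub>0_in_Y x\<^sub>0_in_V \<open>b \<in> B\<close> Y_in_V by (auto simp: B_def)
    also have "\<dots> = card B" using card_nbhd_S[OF x\<^sub>0_in_A] .
    finally show "card A = card B" .
    obtain u where "u \<in> V" "d x\<^sub>0 u = 4" using ecc_attained ecc_Y_eq_4[OF x\<^sub>0_in_Y] by metis
    then have "u \<in> Y" using dist_parity[OF x\<^sub>0_in_V] x\<^sub>0_in_Y by simp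
    then have "u \<in> A" "u \<noteq> x\<^sub>0" using \<open>d x\<^sub>0 u = 4\<close> by (auto simp: A_def B_def)
    moreover have "finite A" by (rule finite_subset[OF _ finite_V]) (auto simp: A_def Y_in_V)
    ultimately have "card {x\<^sub>0, u} \<le> card A" using x\<^sub>0_in_A by (intro card_mono) auto
    then show "2 \<le> card A" using \<open>u \<noteq> x\<^sub>0\<close> by simp
  qed
qed

end

theorem theorem5p5:
  fixes V Y Y' :: "'a set" and E :: "'a \<Rightarrow> 'a \<Rightarrow> bool" and D :: nat
  assumes "dist_regularized_graph V E"
    and "bipartite_YY V E Y Y'"
    and "Y \<noteq> {}" and "Y' \<noteq> {}"
    and "\<forall>x\<in>Y. ecc V E x = D"
  shows "(two_Y_homogeneous V E Y Y' D \<and> D = 4 \<and>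
            (\<forall>w\<in>Y'. \<forall>z\<in>sphere V E w 2. c_num V E 2 w z = 1))
         \<longleftrightarrow>
         (\<exists>n::nat. n \<ge> 2 \<and> (\<exists>f. bij_betw f V (subdiv_V (Knn_V n) (Knn_E n)) \<and>
              (\<forall>x\<in>V. \<forall>y\<in>V. E x y \<longleftrightarrow> subdiv_E (Knn_E n) (f x) (f y)) \<and>
              f ` Y = Inl ` Knn_V n))"
    (is "?i \<longleftrightarrow> ?ii")
proof -
  interpret bipartite_connected_graph V E Y Y'
    using assms(1,2) by unfold_locales (simp_all add: dist_regularized_graph_def)
  show ?thesis
  proof
    assume ?i
    then obtain \<gamma>\<^sub>2 \<gamma>\<^sub>3 where "two_Y_homogeneous_D4 V E Y Y' \<gamma>\<^sub>2 \<gamma>\<^sub>3"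
      using ex_two_Y_homogeneous_D4 assms(1,3) by (auto simp: dist_regularized_graph_def)
    then interpret two_Y_homogeneous_D4 V E Y Y' \<gamma>\<^sub>2 \<gamma>\<^sub>3 .
    obtain x\<^sub>0 where "x\<^sub>0 \<in> Y" using assms(3) by blast
    then interpret two_Y_homogeneous_D4_pointed V E Y Y' \<gamma>\<^sub>2 \<gamma>\<^sub>3 x\<^sub>0 by unfold_locales
    interpret Knn_subdivision V E Y Y' A B by (rule Knn_subdivision_A_B)
    show ?ii using ex_Knn_iso two_le_card_S by blast
  next
    assume ?ii
    then obtain n f where "2 \<le> n" "bij_betw f V (subdiv_V (Knn_V n) (Knn_E n))"
      "\<forall>x\<in>V. \<forall>y\<in>V. E x y \<longleftrightarrow> subdiv_E (Knn_E n) (f x) (f y)" "f ` Y = Inl ` Knn_V n"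
      by blast
    then interpret Knn_subdivision_isomorphism V E Y Y' n f by unfold_locales blast+
    have "D = 4" using ecc_Y assms(3,5) by force
    then show ?i using two_Y_homogeneous_4 c_num_2_Y' by blast
  qed
qed

end
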